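(* There is an absolute constant $C>0$ such that the following holds. Let $n\ge 1$, let $r=r_n\ge 4^{n/5}$, and let $\sigma$ be the map built from $f_r$ as in the context. Let $P=(Q,Q')\in A_{j,k,\sigma}$ for some integers $j,k$. Then $\rho_{P,\sigma}:=\int_0^{2\pi}|\mathrm{Proj}_\theta(\sigma_\theta(Q))\cap\mathrm{Proj}_\theta(\sigma_\theta(Q'))|\,d\theta\le C\,4^{k-2n}$.
   Context: Middle-half Cantor set: $\mathcal{C}_0=[0,1]$ and $\mathcal{C}_{n+1}$ is obtained from $\mathcal{C}_n$ by replacing each of its intervals by the first and last quarters of that interval; $\mathcal{K}_n:=\mathcal{C}_n\times\mathcal{C}_n$ is the union of $4^n$ squares ("Cantor squares") of side $4^{-n}$. For $r>0$, $f_r(y):=r-\sqrt{r^2-y^2}$ if $|y|\le2$ and $f_r(y):=r-\sqrt{r^2-4}$ otherwise; $\sigma_0(x,y):=(x-f_r(y),y)$; $R_\theta$ is clockwise rotation by $\theta$; $\sigma_\theta:=R_{-\theta}\circ\sigma_0\circ R_\theta$ and $\sigma(z,e^{i\theta}):=\sigma_\theta(z)$. $\mathrm{Proj}_\theta$ is orthogonal projection onto the line through the origin in direction $e^{i\theta}$ and $|\cdot|$ is one-dimensional Lebesgue measure. In the rotated coordinates $(x,y)$ whose positive $x$-axis makes angle $\arctan(1/2)$ with the standard $x$-axis, $A_{j,k,\sigma}$ is the set of pairs $(Q,Q')$ of Cantor squares such that for some $\theta$ the images $\sigma_\theta(q)=(x_1,y_1)$, $\sigma_\theta(q')=(x_2,y_2)$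 of their centers satisfy $4^{-k-1}\le|y_1-y_2|\le 4^{-k}$ and $4^{-j-1}\le\left|\frac{x_1-x_2}{y_1-y_2}\right|\le 4^{-j}$. *)

theory Defs
  imports "HOL-Analysis.Analysis"
begin

fun cantor_intervals :: "nat \<Rightarrow> (real \<times> real) set" where
  "cantor_intervals 0 = {(0, 1)}"
| "cantor_intervals (Suc n) =
     (\<Union>(a, b)\<in>cantor_intervals n. {(a, a + (b - a) / 4), (b - (b - a) / 4, b)})"

definition sq :: "real \<Rightarrow> real \<Rightarrow> real \<Rightarrow> real \<Rightarrow> complex set" where
  "sq a b c d = {z. Re z \<in> {a..b} \<and> Im z \<in> {c..d}}"

text \<open>Points of the plane are given in standard coordinates; rc maps a point to its
  coordinates in the rotated system whose positive x-axis makes angle arctan(1/2) with the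
  standard x-axis.\<close>
definition rc :: "complex \<Rightarrow> complex" where
  "rc z = cis (- arctan (1/2)) * z"

definition f_r :: "real \<Rightarrow> real \<Rightarrow> real" where
  "f_r r y = (if \<bar>y\<bar> \<le> 2 then r - sqrt (r\<^sup>2 - y\<^sup>2) else r - sqrt (r\<^sup>2 - 4))"

definition sigma0 :: "real \<Rightarrow> complex \<Rightarrow> complex" where
  "sigma0 r z = Complex (Re z - f_r r (Im z)) (Im z)"

text \<open>R_theta (clockwise rotation by theta) is z \<mapsto> cis(-theta) z; 
  sigma_theta = R_{-theta} o sigma_0 o R_theta.\<close>
definition sigma :: "real \<Rightarrow> real \<Rightarrow> complex \<Rightarrow> complex" where
  "sigma r \<theta> z = cis \<theta> * sigma0 r (cis (- \<theta>) * z)"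

text \<open>Proj_theta(S), expressed in the arclength coordinate t of the line {t e^{i theta}}.\<close>
definition proj_coord :: "real \<Rightarrow> complex set \<Rightarrow> real set" where
  "proj_coord \<theta> S = (\<lambda>z. Re (cis (- \<theta>) * z)) ` S"

definition A_set :: "nat \<Rightarrow> real \<Rightarrow> int \<Rightarrow> int \<Rightarrow> (complex set \<times> complex set) set" where
  "A_set n r j k = {(Q, Q') | Q Q'. \<exists>a b c d a' b' c' d'.
      (a, b) \<in> cantor_intervals n \<and> (c, d) \<in> cantor_intervals n \<and>
      (a', b') \<in> cantor_intervals n \<and> (c', d') \<in> cantor_intervals n \<and>
      Q = sq a b c d \<and> Q' = sq a' b' c' d' \<and>
      (\<exists>\<theta>. let w1 = sigma r \<theta> (rc (Complex ((a + b) / 2) ((c + d) / 2)));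
               w2 = sigma r \<theta> (rc (Complex ((a' + b') / 2) ((c' + d') / 2)))
           in 4 powr (- real_of_int k - 1) \<le> \<bar>Im w1 - Im w2\<bar> \<and>
              \<bar>Im w1 - Im w2\<bar> \<le> 4 powr (- real_of_int k) \<and>
              4 powr (- real_of_int j - 1) \<le> \<bar>(Re w1 - Re w2) / (Im w1 - Im w2)\<bar> \<and>
              \<bar>(Re w1 - Re w2) / (Im w1 - Im w2)\<bar> \<le> 4 powr (- real_of_int j))}"

definition rho :: "real \<Rightarrow> complex set \<Rightarrow> complex set \<Rightarrow> ennreal" where
  "rho r Q Q' = (\<integral>\<^sup>+ \<theta>. indicator {0..2*pi} \<theta> *
      emeasure lebesgue (proj_coord \<theta> (sigma r \<theta> ` rc ` Q) \<inter>
                         proj_coord \<theta> (sigma r \<theta> ` rc ` Q')) \<partial>lborel)"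

end

theory Submission
  imports Defs
begin

text \<open>Write (X, Y) for the coordinates of R_theta z. The projection of sigma_theta(z) to the line
  of direction theta is X - f_r(Y), and for r >= 64 the circle term f_r has slope at most 1/16 on
  the relevant range. So a Cantor square of side s = 4^(-n) projects to an interval of length at
  most 4s, and for two squares whose centres are at distance d, the difference of the projected
  centres, as a function of theta, has derivative of absolute value at least d/4 on the window of
  length 1/4 following any angle where it is at most d/4. Hence the angles at which the two projections meet lie in 32 intervals of length 32s/d,
  and rho <= 4096 s^2/d. Membership in A_(j,k) forces d >= 4^(-k)/12, so rho = O(4^(k-2n)).
  For r < 64 the hypothesis r >= 4^(n/5) gives n <= 14, and the crude bound rho <= 16 pi
  suffices.\<close>

subsection \<open>Cantor squares\<close>

lemma cantor_intervals_bounds: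
  assumes "(a, b) \<in> cantor_intervals n"
  shows "0 \<le> a \<and> a \<le> b \<and> b \<le> 1 \<and> b - a = (1/4::real)^n"
  using assms
proof (induction n arbitrary: a b)
  case 0
  then show ?case by simp
next
  case (Suc n)
  then obtain a0 b0 where I: "(a0, b0) \<in> cantor_intervals n"
    and ab: "(a, b) = (a0, a0 + (b0 - a0) / 4) \<or> (a, b) = (b0 - (b0 - a0) / 4, b0)"
    by auto
  define s where "s = (1/4::real)^n"
  have IH: "0 \<le> a0" "b0 \<le> 1" "b0 - a0 = s" "0 \<le> s" using Suc.IH[OF I] by (simp_all add: s_def)
  have step: "(1/4::real)^Suc n = s / 4" by (simp add: s_def)
  from ab show ?case
  proof
    assume "(a, b) = (a0, a0 + (b0 - a0) / 4)"
    with IH show ?thesis unfolding step by simp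
  next
    assume "(a, b) = (b0 - (b0 - a0) / 4, b0)"
    with IH show ?thesis unfolding step by simp
  qed
qed

lemma norm_le_3_2_if_unit_square:
  assumes "Re z \<in> {0..1}" "Im z \<in> {0..1}"
  shows "cmod z \<le> 3/2"
proof -
  have "(Re z)\<^sup>2 \<le> 1" "(Im z)\<^sup>2 \<le> 1" using assms by (simp_all add: power_le_one)
  then have "(Re z)\<^sup>2 + (Im z)\<^sup>2 \<le> (3/2)\<^sup>2" by (simp add: power2_eq_square)
  then show ?thesis unfolding cmod_def by (rule real_sqrt_le_iff[THEN iffD2, THEN order_trans]) simp
qed

lemma rc_cantor_square_near_centre:
  assumes "(a, b) \<in> cantor_intervals n" "(c, d) \<in> cantor_intervals n"
  defines "q \<equiv> rc (Complex ((a + b) / 2) ((c + d) / 2))"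
  shows "cmod q \<le> 3/2"
    and "z \<in> rc ` sq a b c d \<Longrightarrow> cmod z \<le> 3/2 \<and> cmod (z - q) \<le> (1/4)^n"
proof -
  have ab: "0 \<le> a" "a \<le> b" "b \<le> 1" "b - a = (1/4)^n"
    and cd: "0 \<le> c" "c \<le> d" "d \<le> 1" "d - c = (1/4)^n"
    using cantor_intervals_bounds assms(1,2) by blast+
  have rc_norm: "cmod (rc w) = cmod w" for w unfolding rc_def by (simp add: norm_mult)
  show "cmod q \<le> 3/2"
    unfolding q_def rc_norm using ab cd by (intro norm_le_3_2_if_unit_square) auto
  assume "z \<in> rc ` sq a b c d"
  then obtain w where w: "z = rc w" "Re w \<in> {a..b}" "Im w \<in> {c..d}" unfolding sq_def by auto
  have "cmod w \<le> 3/2" using w ab cd by (intro norm_le_3_2_if_unit_square) auto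
  moreover have "cmod (w - Complex ((a + b) / 2) ((c + d) / 2)) \<le> (1/4)^n"
  proof -
    have "\<bar>Re w - (a + b) / 2\<bar> \<le> (b - a) / 2" "\<bar>Im w - (c + d) / 2\<bar> \<le> (d - c) / 2"
      using w by (auto simp: abs_le_iff field_simps)
    then show ?thesis
      using cmod_le[of "w - Complex ((a + b) / 2) ((c + d) / 2)"] ab cd by simp
  qed
  moreover have "z - q = rc (w - Complex ((a + b) / 2) ((c + d) / 2))"
    unfolding w(1) q_def rc_def by (simp add: algebra_simps)
  ultimately show "cmod z \<le> 3/2 \<and> cmod (z - q) \<le> (1/4)^n" unfolding w(1) by (simp add: rc_norm)
qed

lemma A_set_centres:
  assumes "(Q, Q') \<in> A_set n r j k"
  obtains q q' \<theta>\<^sub>0 where "cmod q \<le> 3/2" "cmod q' \<le> 3/2"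
    and "\<And>z. z \<in> rc ` Q \<Longrightarrow> cmod z \<le> 3/2 \<and> cmod (z - q) \<le> (1/4)^n"
    and "\<And>z. z \<in> rc ` Q' \<Longrightarrow> cmod z \<le> 3/2 \<and> cmod (z - q') \<le> (1/4)^n"
    and "1 / (4 * 4 powr real_of_int k) \<le> \<bar>Im (sigma r \<theta>\<^sub>0 q) - Im (sigma r \<theta>\<^sub>0 q')\<bar>"
proof -
  from assms obtain a b c d a' b' c' d' \<theta>\<^sub>0 where
    I: "(a, b) \<in> cantor_intervals n" "(c, d) \<in> cantor_intervals n"
       "(a', b') \<in> cantor_intervals n" "(c', d') \<in> cantor_intervals n"
    and Q: "Q = sq a b c d" "Q' = sq a' b' c' d'"
    and sep: "4 powr (- real_of_int k - 1) \<le> \<bar>Im (sigma r \<theta>\<^sub>0 (rc (Complex ((a + b) / 2) ((c + d) / 2))))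
                 - Im (sigma r \<theta>\<^sub>0 (rc (Complex ((a' + b') / 2) ((c' + d') / 2))))\<bar>"
    unfolding A_set_def Let_def by blast
  have "4 powr (- real_of_int k - 1) = 1 / (4 * 4 powr real_of_int k)"
    unfolding powr_diff powr_minus_divide by simp
  with sep show thesis
    using that rc_cantor_square_near_centre[OF I(1,2)] rc_cantor_square_near_centre[OF I(3,4)]
    unfolding Q by simp
qed

subsection \<open>Rotated coordinates\<close>

definition rot_x :: "real \<Rightarrow> complex \<Rightarrow> real" where
  "rot_x \<theta> z = Re (cis (-\<theta>) * z)"

definition rot_y :: "real \<Rightarrow> complex \<Rightarrow> real" where
  "rot_y \<theta> z = Im (cis (-\<theta>) * z)"

lemma rot_x_eq: "rot_x \<theta> z = Re z * cos \<theta> + Im z * sin \<theta>"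
  by (simp add: rot_x_def)

lemma rot_y_eq: "rot_y \<theta> z = Im z * cos \<theta> - Re z * sin \<theta>"
  by (simp add: rot_y_def)

lemma rot_x_diff: "rot_x \<theta> z - rot_x \<theta> z' = rot_x \<theta> (z - z')"
  by (simp add: rot_x_eq algebra_simps)

lemma rot_y_diff: "rot_y \<theta> z - rot_y \<theta> z' = rot_y \<theta> (z - z')"
  by (simp add: rot_y_eq algebra_simps)

lemma abs_rot_x_le: "\<bar>rot_x \<theta> z\<bar> \<le> cmod z"
  unfolding rot_x_def by (metis abs_Re_le_cmod mult_cancel_right1 norm_cis norm_mult)

lemma abs_rot_y_le: "\<bar>rot_y \<theta> z\<bar> \<le> cmod z"
  unfolding rot_y_def by (metis abs_Im_le_cmod mult_cancel_right1 norm_cis norm_mult)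

lemma abs_rot_y_le_2: "cmod z \<le> 3/2 \<Longrightarrow> \<bar>rot_y \<theta> z\<bar> \<le> 2"
  using abs_rot_y_le[of \<theta> z] by linarith

lemma rot_x_sq_add_rot_y_sq: "(rot_x \<theta> z)\<^sup>2 + (rot_y \<theta> z)\<^sup>2 = (cmod z)\<^sup>2"
  unfolding rot_x_def rot_y_def cmod_power2[symmetric] by (simp add: norm_mult)

lemma rot_y_add: "rot_y (\<theta> + \<alpha>) z = rot_y \<theta> z * cos \<alpha> - rot_x \<theta> z * sin \<alpha>"
  unfolding rot_x_eq rot_y_eq cos_add sin_add by (simp add: algebra_simps)

lemma abs_sgn_mult_le: "\<bar>sgn a * b\<bar> \<le> \<bar>b :: real\<bar>"
  by (cases "a = 0") (simp_all add: abs_mult)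

subsection \<open>The circle term\<close>

definition sag :: "real \<Rightarrow> real \<Rightarrow> real" where
  "sag r y = r - sqrt (r\<^sup>2 - y\<^sup>2)"

definition sag_slope :: "real \<Rightarrow> real \<Rightarrow> real" where
  "sag_slope r y = y / sqrt (r\<^sup>2 - y\<^sup>2)"

lemma f_r_eq_sag: "\<bar>y\<bar> \<le> 2 \<Longrightarrow> f_r r y = sag r y"
  by (simp add: f_r_def sag_def)

lemma f_r_bounds:
  assumes "r > 0" "\<bar>y\<bar> \<le> 2"
  shows "0 \<le> f_r r y \<and> f_r r y \<le> 4"
proof (cases "y\<^sup>2 \<le> r\<^sup>2")
  case True
  have ry: "\<bar>y\<bar> \<le> r" using real_sqrt_le_mono[OF True] assms by simp
  have "sqrt (r\<^sup>2 - y\<^sup>2) \<le> sqrt (r\<^sup>2)" by (rule real_sqrt_le_mono) simp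
  then have upper: "sqrt (r\<^sup>2 - y\<^sup>2) \<le> r" using assms by simp
  have "y\<^sup>2 \<le> r * \<bar>y\<bar>" using mult_right_mono[OF ry, of "\<bar>y\<bar>"] by (simp add: power2_eq_square)
  then have "(r - \<bar>y\<bar>)\<^sup>2 \<le> r\<^sup>2 - y\<^sup>2" by (simp add: power2_diff)
  then have "r - \<bar>y\<bar> \<le> sqrt (r\<^sup>2 - y\<^sup>2)" by (rule real_le_rsqrt)
  with upper show ?thesis using assms by (simp add: f_r_def)
next
  case False
  \<comment> \<open>only possible for r < 2; here HOL's odd extension sqrt (-x) = - sqrt x is in play\<close>
  then have "sqrt (r\<^sup>2 - y\<^sup>2) = - sqrt (y\<^sup>2 - r\<^sup>2)" by (simp add: real_sqrt_minus[symmetric])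
  moreover have "sqrt (y\<^sup>2 - r\<^sup>2) \<le> sqrt (y\<^sup>2)" by (rule real_sqrt_le_mono) (use assms in simp)
  moreover have "sqrt (y\<^sup>2) = \<bar>y\<bar>" by simp
  moreover have "0 \<le> sqrt (y\<^sup>2 - r\<^sup>2)" using False by simp
  moreover have "r \<le> \<bar>y\<bar>" using real_sqrt_le_mono[of "r\<^sup>2" "y\<^sup>2"] False assms by simp
  ultimately show ?thesis using assms unfolding f_r_def by auto
qed

lemma half_le_sqrt_sq_diff:
  assumes "r \<ge> 64" "\<bar>y\<bar> \<le> 2"
  shows "r / 2 \<le> sqrt (r\<^sup>2 - y\<^sup>2)"
proof (rule real_le_rsqrt)
  have "y\<^sup>2 \<le> 4" using power_mono[of "\<bar>y\<bar>" 2 2] assms by simp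
  moreover have "r * r \<ge> 64 * 64" using assms by (intro mult_mono) auto
  ultimately show "(r / 2)\<^sup>2 \<le> r\<^sup>2 - y\<^sup>2" by (simp add: power2_eq_square)
qed

lemma has_real_derivative_sqrt_sq_diff:
  assumes "0 < r\<^sup>2 - y\<^sup>2"
  shows "((\<lambda>y. sqrt (r\<^sup>2 - y\<^sup>2)) has_real_derivative - (y / sqrt (r\<^sup>2 - y\<^sup>2))) (at y)"
proof -
  have "((\<lambda>y. r\<^sup>2 - y\<^sup>2) has_real_derivative - (2 * y)) (at y)"
    by (auto intro!: derivative_eq_intros)
  from DERIV_chain2[OF DERIV_real_sqrt[OF assms] this]
  have "((\<lambda>y. sqrt (r\<^sup>2 - y\<^sup>2)) has_real_derivative inverse (sqrt (r\<^sup>2 - y\<^sup>2)) / 2 * - (2 * y)) (at y)" .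
  moreover have "inverse (sqrt (r\<^sup>2 - y\<^sup>2)) / 2 * - (2 * y) = - (y / sqrt (r\<^sup>2 - y\<^sup>2))"
    by (simp add: inverse_eq_divide)
  ultimately show ?thesis by simp
qed

lemma has_real_derivative_sag:
  assumes "r \<ge> 64" "\<bar>y\<bar> \<le> 2"
  shows "(sag r has_real_derivative sag_slope r y) (at y)"
proof -
  have "0 < sqrt (r\<^sup>2 - y\<^sup>2)" using half_le_sqrt_sq_diff[OF assms] assms by linarith
  then have "0 < r\<^sup>2 - y\<^sup>2" by simp
  from DERIV_diff[OF DERIV_const has_real_derivative_sqrt_sq_diff[OF this]]
  show ?thesis unfolding sag_def[abs_def] sag_slope_def by simp
qed

lemma abs_sag_slope_le:
  assumes "r \<ge> 64" "\<bar>y\<bar> \<le> 2"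
  shows "\<bar>sag_slope r y\<bar> \<le> 1/16"
proof -
  have S: "r / 2 \<le> sqrt (r\<^sup>2 - y\<^sup>2)" by (rule half_le_sqrt_sq_diff[OF assms])
  then have T: "0 < sqrt (r\<^sup>2 - y\<^sup>2)" using assms by linarith
  have "\<bar>sag_slope r y\<bar> = \<bar>y\<bar> / sqrt (r\<^sup>2 - y\<^sup>2)"
    unfolding sag_slope_def abs_divide abs_of_pos[OF T] ..
  also have "\<dots> \<le> 2 / (r / 2)" using S T assms by (intro frac_le) auto
  also have "\<dots> \<le> 1/16" using assms by (simp add: field_simps)
  finally show ?thesis .
qed

lemma has_real_derivative_sag_slope:
  assumes "r \<ge> 64" "\<bar>y\<bar> \<le> 2"
  shows "(sag_slope r has_real_derivative r\<^sup>2 / (sqrt (r\<^sup>2 - y\<^sup>2))^3) (at y)"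
proof -
  define T where "T = sqrt (r\<^sup>2 - y\<^sup>2)"
  have T: "0 < T" using half_le_sqrt_sq_diff[OF assms] assms unfolding T_def by linarith
  then have TT: "T * T = r\<^sup>2 - y\<^sup>2" unfolding T_def by (simp flip: power2_eq_square)
  from T have "0 < r\<^sup>2 - y\<^sup>2" unfolding T_def by simp
  from DERIV_divide[OF DERIV_ident has_real_derivative_sqrt_sq_diff[OF this]] T
  have "(sag_slope r has_real_derivative (1 * T - y * - (y / T)) / (T * T)) (at y)"
    unfolding sag_slope_def[abs_def] T_def by simp
  moreover have "(1 * T - y * - (y / T)) / (T * T) = r\<^sup>2 / T^3"
    using T TT by (simp add: field_simps power3_eq_cube power2_eq_square)
  ultimately show ?thesis unfolding T_def by simp
qed

lemma abs_sag_slope_deriv_le: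
  assumes "r \<ge> 64" "\<bar>y\<bar> \<le> 2"
  shows "\<bar>r\<^sup>2 / (sqrt (r\<^sup>2 - y\<^sup>2))^3\<bar> \<le> 1/8"
proof -
  define T where "T = sqrt (r\<^sup>2 - y\<^sup>2)"
  have S: "r / 2 \<le> T" unfolding T_def by (rule half_le_sqrt_sq_diff[OF assms])
  have "(r / 2)^3 \<le> T^3" using S assms by (intro power_mono) auto
  then have "r * r\<^sup>2 \<le> 8 * T^3" by (simp add: power_divide power2_eq_square power3_eq_cube)
  moreover have "64 * r\<^sup>2 \<le> r * r\<^sup>2" using assms by (intro mult_right_mono) auto
  ultimately have "8 * r\<^sup>2 \<le> T^3" by linarith
  moreover have "0 < T" using S assms by linarith
  ultimately show ?thesis unfolding T_def[symmetric] by (simp add: field_simps)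
qed

lemma sag_lipschitz:
  assumes "r \<ge> 64" "\<bar>y\<bar> \<le> 2" "\<bar>y'\<bar> \<le> 2"
  shows "\<bar>sag r y - sag r y'\<bar> \<le> \<bar>y - y'\<bar> / 16"
proof -
  have "norm (sag r y - sag r y') \<le> 1/16 * norm (y - y')"
  proof (rule field_differentiable_bound[of "{-2..2}" "sag r" "sag_slope r"])
    fix x :: real assume "x \<in> {-2..2}"
    then have x: "\<bar>x\<bar> \<le> 2" by auto
    show "(sag r has_field_derivative sag_slope r x) (at x within {-2..2})"
      by (rule has_field_derivative_at_within[OF has_real_derivative_sag[OF assms(1) x]])
    show "norm (sag_slope r x) \<le> 1/16" using abs_sag_slope_le[OF assms(1) x] by simp
  qed (use assms in auto)
  then show ?thesis by simp
qed

lemma sag_slope_lipschitz: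
  assumes "r \<ge> 64" "\<bar>y\<bar> \<le> 2" "\<bar>y'\<bar> \<le> 2"
  shows "\<bar>sag_slope r y - sag_slope r y'\<bar> \<le> \<bar>y - y'\<bar> / 8"
proof -
  have "norm (sag_slope r y - sag_slope r y') \<le> 1/8 * norm (y - y')"
  proof (rule field_differentiable_bound[of "{-2..2}" "sag_slope r"
        "\<lambda>y. r\<^sup>2 / (sqrt (r\<^sup>2 - y\<^sup>2))^3"])
    fix x :: real assume "x \<in> {-2..2}"
    then have x: "\<bar>x\<bar> \<le> 2" by auto
    show "(sag_slope r has_field_derivative r\<^sup>2 / (sqrt (r\<^sup>2 - x\<^sup>2))^3) (at x within {-2..2})"
      by (rule has_field_derivative_at_within[OF has_real_derivative_sag_slope[OF assms(1) x]])
    show "norm (r\<^sup>2 / (sqrt (r\<^sup>2 - x\<^sup>2))^3) \<le> 1/8"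
      using abs_sag_slope_deriv_le[OF assms(1) x] by simp
  qed (use assms in auto)
  then show ?thesis by simp
qed

subsection \<open>Projections of sigma_theta\<close>

definition proj_sigma :: "real \<Rightarrow> real \<Rightarrow> complex \<Rightarrow> real" where
  "proj_sigma r \<theta> z = rot_x \<theta> z - f_r r (rot_y \<theta> z)"

definition proj_sigma_dtheta :: "real \<Rightarrow> real \<Rightarrow> complex \<Rightarrow> real" where
  "proj_sigma_dtheta r \<theta> z = rot_y \<theta> z + sag_slope r (rot_y \<theta> z) * rot_x \<theta> z"

lemma sigma_eq: "sigma r \<theta> z = cis \<theta> * Complex (proj_sigma r \<theta> z) (rot_y \<theta> z)"
  unfolding sigma_def sigma0_def proj_sigma_def rot_x_def rot_y_def by (rule refl)

lemma proj_coord_sigma_image: "proj_coord \<theta> (sigma r \<theta> ` Z) = proj_sigma r \<theta> ` Z"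
proof -
  have "cis (-\<theta>) * (cis \<theta> * w) = w" for w
    by (simp only: mult.assoc[symmetric] cis_mult) simp
  then show ?thesis by (simp only: proj_coord_def sigma_eq image_image complex.sel)
qed

lemma abs_Im_sigma_diff_le:
  "\<bar>Im (sigma r \<theta> q) - Im (sigma r \<theta> q')\<bar>
     \<le> \<bar>proj_sigma r \<theta> q - proj_sigma r \<theta> q'\<bar> + \<bar>rot_y \<theta> (q - q')\<bar>"
proof -
  define w where "w = Complex (proj_sigma r \<theta> q - proj_sigma r \<theta> q') (rot_y \<theta> (q - q'))"
  have "sigma r \<theta> q - sigma r \<theta> q' = cis \<theta> * w"
    unfolding sigma_eq w_def rot_y_diff[symmetric] by (simp add: complex_eq_iff algebra_simps)
  have "\<bar>Im (sigma r \<theta> q) - Im (sigma r \<theta> q')\<bar> \<le> cmod (sigma r \<theta> q - sigma r \<theta> q')"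
    using abs_Im_le_cmod[of "sigma r \<theta> q - sigma r \<theta> q'"] by simp
  also have "\<dots> = cmod w" unfolding \<open>sigma r \<theta> q - sigma r \<theta> q' = cis \<theta> * w\<close> by (simp add: norm_mult)
  finally show ?thesis using cmod_le[of w] by (simp add: w_def)
qed

lemma proj_sigma_eq_sag:
  "cmod z \<le> 3/2 \<Longrightarrow> proj_sigma r \<theta> z = rot_x \<theta> z - sag r (rot_y \<theta> z)"
  unfolding proj_sigma_def by (simp add: f_r_eq_sag abs_rot_y_le_2)

lemma proj_sigma_bounds:
  assumes "r > 0" "cmod z \<le> 3/2"
  shows "proj_sigma r \<theta> z \<in> {-6..2}"
proof -
  have "\<bar>rot_x \<theta> z\<bar> \<le> 3/2" using abs_rot_x_le[of \<theta> z] assms(2) by linarith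
  moreover have "0 \<le> f_r r (rot_y \<theta> z) \<and> f_r r (rot_y \<theta> z) \<le> 4"
    using f_r_bounds[OF assms(1) abs_rot_y_le_2[OF assms(2)]] .
  ultimately show ?thesis unfolding proj_sigma_def by (auto simp: abs_le_iff)
qed

lemma proj_sigma_lipschitz:
  assumes "r \<ge> 64" "cmod z \<le> 3/2" "cmod z' \<le> 3/2"
  shows "\<bar>proj_sigma r \<theta> z - proj_sigma r \<theta> z'\<bar> \<le> 17/16 * cmod (z - z')"
proof -
  have "\<bar>sag r (rot_y \<theta> z) - sag r (rot_y \<theta> z')\<bar> \<le> \<bar>rot_y \<theta> (z - z')\<bar> / 16"
    using sag_lipschitz[OF assms(1) abs_rot_y_le_2[OF assms(2), of \<theta>] abs_rot_y_le_2[OF assms(3), of \<theta>]]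
    unfolding rot_y_diff .
  moreover have "\<bar>rot_y \<theta> (z - z')\<bar> \<le> cmod (z - z')" by (rule abs_rot_y_le)
  moreover have "\<bar>rot_x \<theta> z - rot_x \<theta> z'\<bar> \<le> cmod (z - z')"
    unfolding rot_x_diff by (rule abs_rot_x_le)
  ultimately show ?thesis
    unfolding proj_sigma_eq_sag[OF assms(2)] proj_sigma_eq_sag[OF assms(3)] by linarith
qed

lemma has_real_derivative_proj_sigma:
  assumes "r \<ge> 64" "cmod z \<le> 3/2"
  shows "((\<lambda>\<theta>. proj_sigma r \<theta> z) has_real_derivative proj_sigma_dtheta r \<theta> z) (at \<theta>)"
proof -
  have proj: "(\<lambda>\<theta>. proj_sigma r \<theta> z)
      = (\<lambda>\<theta>. (Re z * cos \<theta> + Im z * sin \<theta>) - sag r (Im z * cos \<theta> - Re z * sin \<theta>))"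
    by (simp add: proj_sigma_eq_sag[OF assms(2)] rot_x_eq rot_y_eq)
  have "(sag r has_real_derivative sag_slope r (rot_y \<theta> z)) (at (rot_y \<theta> z))"
    by (rule has_real_derivative_sag[OF assms(1) abs_rot_y_le_2[OF assms(2)]])
  then have dY: "((\<lambda>\<theta>. sag r (Im z * cos \<theta> - Re z * sin \<theta>)) has_real_derivative
      sag_slope r (rot_y \<theta> z) * (- (Im z * sin \<theta>) - Re z * cos \<theta>)) (at \<theta>)"
    unfolding rot_y_eq by (rule DERIV_chain2) (auto intro!: derivative_eq_intros)
  have dX: "((\<lambda>\<theta>. Re z * cos \<theta> + Im z * sin \<theta>) has_real_derivative
      - (Re z * sin \<theta>) + Im z * cos \<theta>) (at \<theta>)"
    by (auto intro!: derivative_eq_intros)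
  from DERIV_diff[OF dX dY] show ?thesis
    unfolding proj proj_sigma_dtheta_def by (simp add: rot_x_eq rot_y_eq algebra_simps)
qed

subsection \<open>Transversality\<close>

lemma sag_slope_term_diff_le:
  assumes "r \<ge> 64" "cmod q \<le> 3/2" "cmod q' \<le> 3/2"
  shows "\<bar>sag_slope r (rot_y \<theta> q) * rot_x \<theta> q - sag_slope r (rot_y \<theta> q') * rot_x \<theta> q'\<bar>
    \<le> cmod (q - q') / 4"
proof -
  define d A A' X X' where "d = cmod (q - q')"
    and "A = sag_slope r (rot_y \<theta> q)" and "A' = sag_slope r (rot_y \<theta> q')"
    and "X = rot_x \<theta> q" and "X' = rot_x \<theta> q'"
  have y: "\<bar>rot_y \<theta> q\<bar> \<le> 2" "\<bar>rot_y \<theta> q'\<bar> \<le> 2"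
    using abs_rot_y_le_2 assms(2,3) by blast+
  have A: "\<bar>A\<bar> \<le> 1/16" unfolding A_def by (rule abs_sag_slope_le[OF assms(1) y(1)])
  have AA: "\<bar>A - A'\<bar> \<le> d / 8"
    using sag_slope_lipschitz[OF assms(1) y] abs_rot_y_le[of \<theta> "q - q'"]
    unfolding A_def A'_def d_def rot_y_diff by linarith
  have X': "\<bar>X'\<bar> \<le> 3/2" using abs_rot_x_le[of \<theta> q'] assms(3) unfolding X'_def by linarith
  have XX: "\<bar>X - X'\<bar> \<le> d" unfolding X_def X'_def d_def rot_x_diff by (rule abs_rot_x_le)
  have "A * X - A' * X' = A * (X - X') + X' * (A - A')" by (simp add: algebra_simps)
  then have "\<bar>A * X - A' * X'\<bar> \<le> \<bar>A\<bar> * \<bar>X - X'\<bar> + \<bar>X'\<bar> * \<bar>A - A'\<bar>"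
    by (simp add: abs_mult[symmetric] abs_triangle_ineq)
  also have "\<dots> \<le> 1/16 * d + 3/2 * (d / 8)" by (intro add_mono mult_mono A XX X' AA) auto
  finally show ?thesis unfolding A_def A'_def X_def X'_def d_def by simp
qed

lemma sin_cos_bounds_if_le_quarter:
  assumes "0 \<le> \<alpha>" "\<alpha> \<le> (1/4::real)"
  shows "0 \<le> sin \<alpha>" "sin \<alpha> \<le> 1/4" "24/25 \<le> cos \<alpha>"
proof -
  show s: "0 \<le> sin \<alpha>" "sin \<alpha> \<le> 1/4"
    using assms sin_x_le_x[OF assms(1)] pi_gt3 by (auto intro: sin_ge_zero)
  have "(sin \<alpha>)\<^sup>2 \<le> (1/4)\<^sup>2" using power_mono[OF s(2) s(1)] .
  then have "(24/25)\<^sup>2 \<le> (cos \<alpha>)\<^sup>2" using sin_cos_squared_add[of \<alpha>] by (simp add: power2_eq_square)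
  then show "24/25 \<le> cos \<alpha>"
    by (rule power2_le_imp_le) (use assms pi_gt3 in \<open>auto intro: cos_ge_zero\<close>)
qed

lemma rot_y_stays_large:
  assumes small: "\<bar>rot_x \<theta>\<^sub>1 w\<bar> \<le> 5/16 * cmod w" and "\<theta>\<^sub>1 \<le> \<theta>" "\<theta> \<le> \<theta>\<^sub>1 + 1/4"
  shows "3/4 * cmod w \<le> sgn (rot_y \<theta>\<^sub>1 w) * rot_y \<theta> w"
proof -
  define X Y \<alpha> d where "X = rot_x \<theta>\<^sub>1 w" and "Y = rot_y \<theta>\<^sub>1 w" and "\<alpha> = \<theta> - \<theta>\<^sub>1"
    and "d = cmod w"
  have rot: "rot_y \<theta> w = Y * cos \<alpha> - X * sin \<alpha>"
    using rot_y_add[of \<theta>\<^sub>1 \<alpha> w] by (simp add: X_def Y_def \<alpha>_def)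
  have "X\<^sup>2 + Y\<^sup>2 = d\<^sup>2" unfolding X_def Y_def d_def by (rule rot_x_sq_add_rot_y_sq)
  moreover have "X\<^sup>2 \<le> 25/256 * d\<^sup>2"
  proof -
    have "X\<^sup>2 \<le> (5/16 * d)\<^sup>2" using power_mono[OF small[folded X_def d_def], of 2] by simp
    also have "\<dots> = 25/256 * d\<^sup>2" by (simp add: power2_eq_square)
    finally show ?thesis .
  qed
  ultimately have "81/100 * d\<^sup>2 \<le> Y\<^sup>2" using zero_le_power2[of d] by linarith
  have "(9/10 * d)\<^sup>2 = 81/100 * d\<^sup>2" by (simp add: power2_eq_square)
  also have "\<dots> \<le> \<bar>Y\<bar>\<^sup>2" using \<open>81/100 * d\<^sup>2 \<le> Y\<^sup>2\<close> by simp
  finally have Y: "9/10 * d \<le> \<bar>Y\<bar>" by (rule power2_le_imp_le) simp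
  have "0 \<le> \<alpha>" "\<alpha> \<le> 1/4" using assms(2,3) unfolding \<alpha>_def by auto
  note s = sin_cos_bounds_if_le_quarter(1,2)[OF this] and c = sin_cos_bounds_if_le_quarter(3)[OF this]
  have "sgn Y * rot_y \<theta> w = \<bar>Y\<bar> * cos \<alpha> - sgn Y * X * sin \<alpha>"
    unfolding rot by (simp add: sgn_if abs_if algebra_simps)
  moreover have "9/10 * d * (24/25) \<le> \<bar>Y\<bar> * cos \<alpha>" using Y c by (intro mult_mono) auto
  moreover have "sgn Y * X * sin \<alpha> \<le> 5/16 * d * (1/4)"
  proof -
    have "sgn Y * X * sin \<alpha> \<le> \<bar>X\<bar> * sin \<alpha>"
      using s(1) abs_sgn_mult_le[of Y X] by (intro mult_right_mono) auto
    also have "\<dots> \<le> 5/16 * d * (1/4)" using small s by (intro mult_mono) (auto simp: X_def d_def)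
    finally show ?thesis .
  qed
  moreover have "0 \<le> d" by (simp add: d_def)
  ultimately show ?thesis unfolding Y_def d_def by linarith
qed

lemma proj_sigma_diff_slope:
  assumes r: "r \<ge> 64" and q: "cmod q \<le> 3/2" and q': "cmod q' \<le> 3/2"
    and small: "\<bar>proj_sigma r \<theta>\<^sub>1 q - proj_sigma r \<theta>\<^sub>1 q'\<bar> \<le> cmod (q - q') / 4"
    and "\<theta>\<^sub>1 \<le> \<theta>" "\<theta> \<le> \<theta>\<^sub>1 + 1/4"
  shows "cmod (q - q') / 4
    \<le> sgn (rot_y \<theta>\<^sub>1 (q - q')) * (proj_sigma_dtheta r \<theta> q - proj_sigma_dtheta r \<theta> q')"
proof -
  define d \<sigma> where "d = cmod (q - q')" and "\<sigma> = sgn (rot_y \<theta>\<^sub>1 (q - q'))"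
  have "\<bar>sag r (rot_y \<theta>\<^sub>1 q) - sag r (rot_y \<theta>\<^sub>1 q')\<bar> \<le> d / 16"
    using sag_lipschitz[OF r abs_rot_y_le_2[OF q, of \<theta>\<^sub>1] abs_rot_y_le_2[OF q', of \<theta>\<^sub>1]]
      abs_rot_y_le[of \<theta>\<^sub>1 "q - q'"]
    unfolding d_def rot_y_diff by linarith
  then have "\<bar>rot_x \<theta>\<^sub>1 (q - q')\<bar> \<le> 5/16 * d"
    using small unfolding proj_sigma_eq_sag[OF q] proj_sigma_eq_sag[OF q'] d_def rot_x_diff[symmetric]
    by linarith
  then have large: "3/4 * d \<le> \<sigma> * rot_y \<theta> (q - q')"
    unfolding d_def \<sigma>_def using assms(5,6) by (rule rot_y_stays_large)
  have "\<bar>\<sigma> * (sag_slope r (rot_y \<theta> q) * rot_x \<theta> q - sag_slope r (rot_y \<theta> q') * rot_x \<theta> q')\<bar>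
      \<le> d / 4"
    unfolding \<sigma>_def d_def by (rule order_trans[OF abs_sgn_mult_le sag_slope_term_diff_le[OF r q q']])
  moreover have "\<sigma> * (proj_sigma_dtheta r \<theta> q - proj_sigma_dtheta r \<theta> q')
      = \<sigma> * rot_y \<theta> (q - q')
        + \<sigma> * (sag_slope r (rot_y \<theta> q) * rot_x \<theta> q - sag_slope r (rot_y \<theta> q') * rot_x \<theta> q')"
    unfolding proj_sigma_dtheta_def rot_y_diff[symmetric] by (simp add: algebra_simps)
  ultimately show ?thesis using large unfolding d_def \<sigma>_def by linarith
qed

lemma proj_sigma_meeting_angles_close:
  assumes r: "r \<ge> 64" and q: "cmod q \<le> 3/2" and q': "cmod q' \<le> 3/2"
    and d: "0 < cmod (q - q')" and \<theta>: "\<theta>\<^sub>1 \<le> \<theta>\<^sub>2" "\<theta>\<^sub>2 \<le> \<theta>\<^sub>1 + 1/4"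
    and e1: "\<bar>proj_sigma r \<theta>\<^sub>1 q - proj_sigma r \<theta>\<^sub>1 q'\<bar> \<le> e"
    and e2: "\<bar>proj_sigma r \<theta>\<^sub>2 q - proj_sigma r \<theta>\<^sub>2 q'\<bar> \<le> e"
    and e: "e \<le> cmod (q - q') / 4"
  shows "\<theta>\<^sub>2 - \<theta>\<^sub>1 \<le> 8 * e / cmod (q - q')"
proof (cases "\<theta>\<^sub>1 = \<theta>\<^sub>2")
  case True
  then show ?thesis using e1 d by simp
next
  case False
  then have lt: "\<theta>\<^sub>1 < \<theta>\<^sub>2" using \<theta>(1) by simp
  define H H' where "H \<theta> = proj_sigma r \<theta> q - proj_sigma r \<theta> q'"
    and "H' \<theta> = proj_sigma_dtheta r \<theta> q - proj_sigma_dtheta r \<theta> q'" for \<theta>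
  define \<sigma> where "\<sigma> = sgn (rot_y \<theta>\<^sub>1 (q - q'))"
  have dH: "(H has_real_derivative H' \<theta>) (at \<theta>)" for \<theta>
    unfolding H_def[abs_def] H'_def by (intro DERIV_diff has_real_derivative_proj_sigma r q q')
  obtain \<xi> where \<xi>: "\<theta>\<^sub>1 < \<xi>" "\<xi> < \<theta>\<^sub>2" and mvt: "H \<theta>\<^sub>2 - H \<theta>\<^sub>1 = (\<theta>\<^sub>2 - \<theta>\<^sub>1) * H' \<xi>"
    using MVT2[OF lt, of H H'] dH by blast
  have "(\<theta>\<^sub>2 - \<theta>\<^sub>1) * (cmod (q - q') / 4) \<le> (\<theta>\<^sub>2 - \<theta>\<^sub>1) * (\<sigma> * H' \<xi>)"
    unfolding \<sigma>_def H'_def using \<xi> \<theta> e1 e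
    by (intro mult_left_mono proj_sigma_diff_slope[OF r q q']) auto
  also have "\<dots> = \<sigma> * (H \<theta>\<^sub>2 - H \<theta>\<^sub>1)" unfolding mvt by simp
  also have "\<dots> \<le> \<bar>H \<theta>\<^sub>2 - H \<theta>\<^sub>1\<bar>" unfolding \<sigma>_def by (rule order_trans[OF abs_ge_self abs_sgn_mult_le])
  also have "\<dots> \<le> 2 * e" using e1 e2 unfolding H_def by linarith
  finally show ?thesis using d by (simp add: field_simps)
qed

subsection \<open>Integration over the angle\<close>

lemma subset_interval_if_diameter_le:
  fixes S :: "real set"
  assumes "\<And>x y. x \<in> S \<Longrightarrow> y \<in> S \<Longrightarrow> \<bar>x - y\<bar> \<le> D"
  shows "\<exists>a. S \<subseteq> {a..a + D}"
proof (cases "S = {}")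
  case False
  then obtain x0 where x0: "x0 \<in> S" by auto
  have bdd: "bdd_below S" by (rule bdd_belowI[of _ "x0 - D"]) (use assms x0 in force)
  have "S \<subseteq> {Inf S..Inf S + D}"
  proof
    fix y assume y: "y \<in> S"
    have "Inf S \<le> y" using bdd y by (rule cInf_lower[rotated])
    moreover have "y - D \<le> Inf S" by (rule cInf_greatest[OF False]) (use assms y in force)
    ultimately show "y \<in> {Inf S..Inf S + D}" by auto
  qed
  then show ?thesis by blast
qed simp

lemma cover_by_intervals_if_locally_close:
  fixes G :: "real set"
  assumes "\<And>x y. x \<in> G \<Longrightarrow> y \<in> G \<Longrightarrow> \<bar>x - y\<bar> \<le> 1/4 \<Longrightarrow> \<bar>x - y\<bar> \<le> D"
  shows "\<exists>a. \<forall>\<theta> \<in> G \<inter> {0..2*pi}. \<exists>i<(32::nat). \<theta> \<in> {a i..a i + D}"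
proof -
  define B where "B i = {\<theta> \<in> G. real i / 4 \<le> \<theta> \<and> \<theta> \<le> real i / 4 + 1/4}" for i :: nat
  have "\<exists>a. B i \<subseteq> {a..a + D}" for i
  proof (rule subset_interval_if_diameter_le)
    fix x y assume "x \<in> B i" "y \<in> B i"
    then have "x \<in> G" "y \<in> G" "\<bar>x - y\<bar> \<le> 1/4" unfolding B_def abs_le_iff by auto
    then show "\<bar>x - y\<bar> \<le> D" by (rule assms)
  qed
  then obtain a where a: "\<And>i. B i \<subseteq> {a i..a i + D}" by metis
  have "\<exists>i<32. \<theta> \<in> B i" if "\<theta> \<in> G" "\<theta> \<in> {0..2*pi}" for \<theta>
  proof -
    define i where "i = nat \<lfloor>4 * \<theta>\<rfloor>"
    have i: "real i = of_int \<lfloor>4 * \<theta>\<rfloor>" unfolding i_def using that by simp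
    have lo: "real i \<le> 4 * \<theta>" unfolding i by (rule of_int_floor_le)
    have hi: "4 * \<theta> < real i + 1" unfolding i by (rule real_of_int_floor_add_one_gt)
    have "4 * \<theta> < 32" using that pi_less_4 by simp
    then have "real i < 32" using lo by linarith
    moreover have "real i / 4 \<le> \<theta>" "\<theta> \<le> real i / 4 + 1/4" using lo hi by linarith+
    ultimately show ?thesis unfolding B_def using that(1) by auto
  qed
  with a show ?thesis by blast
qed

lemma nn_integral_indicator_le_cover:
  assumes "\<And>\<theta>. emeasure lebesgue (S \<theta>) \<le> ennreal W" "0 \<le> W" "0 \<le> D"
    and cover: "\<And>\<theta>. \<theta> \<in> T \<Longrightarrow> S \<theta> \<noteq> {} \<Longrightarrow> \<exists>i<N. \<theta> \<in> {a i..a i + D}"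
  shows "(\<integral>\<^sup>+ \<theta>. indicator T \<theta> * emeasure lebesgue (S \<theta>) \<partial>lborel) \<le> ennreal (W * (real N * D))"
proof -
  have "(\<integral>\<^sup>+ \<theta>. indicator T \<theta> * emeasure lebesgue (S \<theta>) \<partial>lborel)
      \<le> (\<integral>\<^sup>+ \<theta>. ennreal W * (\<Sum>i<N. indicator {a i..a i + D} \<theta>) \<partial>lborel)"
  proof (rule nn_integral_mono)
    fix \<theta>
    show "indicator T \<theta> * emeasure lebesgue (S \<theta>) \<le> ennreal W * (\<Sum>i<N. indicator {a i..a i + D} \<theta>)"
    proof (cases "\<theta> \<in> T \<and> S \<theta> \<noteq> {}")
      case True
      then obtain i where i: "i < N" "\<theta> \<in> {a i..a i + D}" using cover by blast
      have "(1::ennreal) \<le> (\<Sum>i<N. indicator {a i..a i + D} \<theta>)"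
        using member_le_sum[of i "{..<N}" "\<lambda>i. indicator {a i..a i + D} \<theta> :: ennreal"] i by simp
      then have "ennreal W \<le> ennreal W * (\<Sum>i<N. indicator {a i..a i + D} \<theta>)"
        using mult_left_mono[of 1 _ "ennreal W"] by simp
      then show ?thesis using True assms(1)[of \<theta>] by simp
    qed auto
  qed
  also have "\<dots> = ennreal W * (\<integral>\<^sup>+ \<theta>. (\<Sum>i<N. indicator {a i..a i + D} \<theta>) \<partial>lborel)"
    by (rule nn_integral_cmult) measurable
  also have "\<dots> = ennreal W * (\<Sum>i<N. emeasure lborel {a i..a i + D})"
    by (subst nn_integral_sum) (auto simp: nn_integral_indicator)
  also have "\<dots> = ennreal (W * (real N * D))"
    using assms(2,3) by (simp add: ennreal_of_nat_eq_real_of_nat ennreal_mult)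
  finally show ?thesis .
qed

lemma proj_sigma_near_centre:
  assumes "r \<ge> 64" "cmod c \<le> 3/2" "cmod z \<le> 3/2 \<and> cmod (z - c) \<le> s"
  shows "\<bar>proj_sigma r \<theta> z - proj_sigma r \<theta> c\<bar> \<le> 2 * s"
  using proj_sigma_lipschitz[OF assms(1) conjunct1[OF assms(3)] assms(2), of \<theta>] assms(3)
  by linarith

lemma emeasure_subset_proj_sigma_image_le:
  assumes r: "r \<ge> 64" and q: "cmod q \<le> 3/2" and s: "0 \<le> s"
    and Z: "\<And>z. z \<in> Z \<Longrightarrow> cmod z \<le> 3/2 \<and> cmod (z - q) \<le> s"
    and S: "S \<subseteq> proj_sigma r \<theta> ` Z"
  shows "emeasure lebesgue S \<le> ennreal (4 * s)"
proof -
  have "proj_sigma r \<theta> ` Z \<subseteq> {proj_sigma r \<theta> q - 2 * s..proj_sigma r \<theta> q + 2 * s}"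
  proof (rule image_subsetI)
    fix z assume "z \<in> Z"
    then show "proj_sigma r \<theta> z \<in> {proj_sigma r \<theta> q - 2 * s..proj_sigma r \<theta> q + 2 * s}"
      using proj_sigma_near_centre[OF r q Z[OF \<open>z \<in> Z\<close>], of \<theta>] by (simp add: abs_le_iff)
  qed
  with S have "emeasure lebesgue S
      \<le> emeasure lebesgue {proj_sigma r \<theta> q - 2 * s..proj_sigma r \<theta> q + 2 * s}"
    by (intro emeasure_mono) auto
  then show ?thesis using s by simp
qed

lemma proj_sigma_centres_close_if_images_meet:
  assumes r: "r \<ge> 64" and q: "cmod q \<le> 3/2" and q': "cmod q' \<le> 3/2"
    and Z: "\<And>z. z \<in> Z \<Longrightarrow> cmod z \<le> 3/2 \<and> cmod (z - q) \<le> s"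
    and Z': "\<And>z. z \<in> Z' \<Longrightarrow> cmod z \<le> 3/2 \<and> cmod (z - q') \<le> s"
    and meet: "proj_sigma r \<theta> ` Z \<inter> proj_sigma r \<theta> ` Z' \<noteq> {}"
  shows "\<bar>proj_sigma r \<theta> q - proj_sigma r \<theta> q'\<bar> \<le> 4 * s"
proof -
  obtain z z' where z: "z \<in> Z" "z' \<in> Z'" "proj_sigma r \<theta> z = proj_sigma r \<theta> z'"
    using meet by blast
  then show ?thesis
    using proj_sigma_near_centre[OF r q Z[OF z(1)], of \<theta>]
      proj_sigma_near_centre[OF r q' Z'[OF z(2)], of \<theta>] by linarith
qed

lemma meeting_angles_cover:
  fixes q q' :: complex
  assumes r: "r \<ge> 64" and q: "cmod q \<le> 3/2" and q': "cmod q' \<le> 3/2"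
    and far: "16 * s \<le> cmod (q - q')" and d: "0 < cmod (q - q')"
    and Z: "\<And>z. z \<in> Z \<Longrightarrow> cmod z \<le> 3/2 \<and> cmod (z - q) \<le> s"
    and Z': "\<And>z. z \<in> Z' \<Longrightarrow> cmod z \<le> 3/2 \<and> cmod (z - q') \<le> s"
  defines "G \<equiv> {\<theta>. proj_sigma r \<theta> ` Z \<inter> proj_sigma r \<theta> ` Z' \<noteq> {}}"
  shows "\<exists>a. \<forall>\<theta> \<in> G \<inter> {0..2*pi}. \<exists>i<(32::nat). \<theta> \<in> {a i..a i + 32 * s / cmod (q - q')}"
proof (rule cover_by_intervals_if_locally_close)
  have meet: "\<bar>proj_sigma r \<theta> q - proj_sigma r \<theta> q'\<bar> \<le> 4 * s" if "\<theta> \<in> G" for \<theta>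
    using that unfolding G_def by (intro proj_sigma_centres_close_if_images_meet[OF r q q' Z Z']) auto
  have e: "4 * s \<le> cmod (q - q') / 4" using far by simp
  have "\<theta>\<^sub>2 - \<theta>\<^sub>1 \<le> 32 * s / cmod (q - q')"
    if "\<theta>\<^sub>1 \<in> G" "\<theta>\<^sub>2 \<in> G" "\<theta>\<^sub>1 \<le> \<theta>\<^sub>2" "\<theta>\<^sub>2 \<le> \<theta>\<^sub>1 + 1/4" for \<theta>\<^sub>1 \<theta>\<^sub>2
    using proj_sigma_meeting_angles_close[OF r q q' d that(3,4) meet[OF that(1)] meet[OF that(2)] e]
    by simp
  then show "\<bar>x - y\<bar> \<le> 32 * s / cmod (q - q')"
    if "x \<in> G" "y \<in> G" "\<bar>x - y\<bar> \<le> 1/4" for x y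
    using that by (cases "x \<le> y") (simp_all add: abs_le_iff)
qed

lemma integral_meeting_projections_le:
  fixes q q' :: complex
  assumes r: "r \<ge> 64" and q: "cmod q \<le> 3/2" and q': "cmod q' \<le> 3/2"
    and d: "0 < cmod (q - q')" and s: "0 \<le> s"
    and Z: "\<And>z. z \<in> Z \<Longrightarrow> cmod z \<le> 3/2 \<and> cmod (z - q) \<le> s"
    and Z': "\<And>z. z \<in> Z' \<Longrightarrow> cmod z \<le> 3/2 \<and> cmod (z - q') \<le> s"
  shows "(\<integral>\<^sup>+ \<theta>. indicator {0..2*pi} \<theta> *
      emeasure lebesgue (proj_sigma r \<theta> ` Z \<inter> proj_sigma r \<theta> ` Z') \<partial>lborel)
    \<le> ennreal (4096 * s\<^sup>2 / cmod (q - q'))"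
proof -
  have S_le: "emeasure lebesgue (proj_sigma r \<theta> ` Z \<inter> proj_sigma r \<theta> ` Z') \<le> ennreal (4 * s)"
    for \<theta>
    by (rule emeasure_subset_proj_sigma_image_le[OF r q s Z Int_lower1])
  show ?thesis
  proof (cases "cmod (q - q') < 16 * s")
    case True
    have "32 * s * cmod (q - q') \<le> 32 * s * (16 * s)"
      using True s by (intro mult_left_mono) auto
    also have "\<dots> \<le> 4096 * s\<^sup>2" using zero_le_power2[of s] by (simp add: power2_eq_square)
    finally have "32 * s \<le> 4096 * s\<^sup>2 / cmod (q - q')" using d by (simp add: pos_le_divide_eq)
    moreover have "4 * s * (real 1 * (2 * pi)) \<le> 32 * s"
      using mult_right_mono[OF less_imp_le[OF pi_less_4] s] by simp
    moreover have "(\<integral>\<^sup>+ \<theta>. indicator {0..2*pi} \<theta> *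
        emeasure lebesgue (proj_sigma r \<theta> ` Z \<inter> proj_sigma r \<theta> ` Z') \<partial>lborel)
        \<le> ennreal (4 * s * (real 1 * (2 * pi)))"
      by (rule nn_integral_indicator_le_cover[where a="\<lambda>_. 0"]) (use s S_le in auto)
    ultimately show ?thesis by (meson ennreal_leI order_trans)
  next
    case False
    obtain a where "\<forall>\<theta> \<in> {\<theta>. proj_sigma r \<theta> ` Z \<inter> proj_sigma r \<theta> ` Z' \<noteq> {}} \<inter> {0..2*pi}.
        \<exists>i<(32::nat). \<theta> \<in> {a i..a i + 32 * s / cmod (q - q')}"
      using meeting_angles_cover[OF r q q' _ d Z Z'] False by fastforce
    then have "(\<integral>\<^sup>+ \<theta>. indicator {0..2*pi} \<theta> *
        emeasure lebesgue (proj_sigma r \<theta> ` Z \<inter> proj_sigma r \<theta> ` Z') \<partial>lborel)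
        \<le> ennreal (4 * s * (real 32 * (32 * s / cmod (q - q'))))"
      by (intro nn_integral_indicator_le_cover[where a=a, OF S_le]) (use s d in auto)
    also have "4 * s * (real 32 * (32 * s / cmod (q - q'))) = 4096 * s\<^sup>2 / cmod (q - q')"
      by (simp add: power2_eq_square)
    finally show ?thesis .
  qed
qed

subsection \<open>The bound on \<rho>\<close>

lemma rho_eq_integral_proj_sigma:
  "rho r Q Q' = (\<integral>\<^sup>+ \<theta>. indicator {0..2*pi} \<theta> *
      emeasure lebesgue (proj_sigma r \<theta> ` rc ` Q \<inter> proj_sigma r \<theta> ` rc ` Q') \<partial>lborel)"
  unfolding rho_def proj_coord_sigma_image ..

lemma rho_le_large_radius:
  assumes r: "64 \<le> r" and A: "(Q, Q') \<in> A_set n r j k"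
  shows "rho r Q Q' \<le> ennreal (4^34 * (4 powr real_of_int k * ((1/4)^n)\<^sup>2))"
proof -
  define K s where "K = 4 powr real_of_int k" and "s = (1/4::real)^n"
  obtain q q' \<theta>\<^sub>0 where q: "cmod q \<le> 3/2" and q': "cmod q' \<le> 3/2"
    and Z: "\<And>z. z \<in> rc ` Q \<Longrightarrow> cmod z \<le> 3/2 \<and> cmod (z - q) \<le> s"
    and Z': "\<And>z. z \<in> rc ` Q' \<Longrightarrow> cmod z \<le> 3/2 \<and> cmod (z - q') \<le> s"
    and sep: "1 / (4 * K) \<le> \<bar>Im (sigma r \<theta>\<^sub>0 q) - Im (sigma r \<theta>\<^sub>0 q')\<bar>"
    using A_set_centres[OF A] unfolding K_def s_def by metis
  have "1 / (4 * K) \<le> 3 * cmod (q - q')"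
    using sep abs_Im_sigma_diff_le[of r \<theta>\<^sub>0 q q'] proj_sigma_lipschitz[OF r q q', of \<theta>\<^sub>0]
      abs_rot_y_le[of \<theta>\<^sub>0 "q - q'"] by linarith
  then have Kd: "1 \<le> 12 * K * cmod (q - q')" by (simp add: K_def field_simps)
  then have d: "0 < cmod (q - q')" by (cases "q = q'") auto
  have "rho r Q Q' \<le> ennreal (4096 * s\<^sup>2 / cmod (q - q'))"
    unfolding rho_eq_integral_proj_sigma
    by (rule integral_meeting_projections_le[OF r q q' d _ Z Z']) (simp add: s_def)
  also have "\<dots> \<le> ennreal (4^34 * (K * s\<^sup>2))"
  proof (rule ennreal_leI)
    have "1 / cmod (q - q') \<le> 12 * K" using Kd d by (simp add: field_simps)
    then have "4096 * s\<^sup>2 * (1 / cmod (q - q')) \<le> 4096 * s\<^sup>2 * (12 * K)"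
      by (rule mult_left_mono) simp
    then have "4096 * s\<^sup>2 / cmod (q - q') \<le> 4096 * s\<^sup>2 * (12 * K)" by simp
    also have "\<dots> \<le> 4^34 * (K * s\<^sup>2)" by (simp add: K_def)
    finally show "4096 * s\<^sup>2 / cmod (q - q') \<le> 4^34 * (K * s\<^sup>2)" .
  qed
  finally show ?thesis unfolding K_def s_def .
qed

lemma rho_le_small_radius:
  assumes rn: "4 powr (real n / 5) \<le> r" and r: "r < 64" and A: "(Q, Q') \<in> A_set n r j k"
  shows "rho r Q Q' \<le> ennreal (4^34 * (4 powr real_of_int k * ((1/4)^n)\<^sup>2))"
proof -
  define K s where "K = 4 powr real_of_int k" and "s = (1/4::real)^n"
  obtain q q' \<theta>\<^sub>0 where q: "cmod q \<le> 3/2" and q': "cmod q' \<le> 3/2"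
    and Z: "\<And>z. z \<in> rc ` Q \<Longrightarrow> cmod z \<le> 3/2" and Z': "\<And>z. z \<in> rc ` Q' \<Longrightarrow> cmod z \<le> 3/2"
    and sep: "1 / (4 * K) \<le> \<bar>Im (sigma r \<theta>\<^sub>0 q) - Im (sigma r \<theta>\<^sub>0 q')\<bar>"
    using A_set_centres[OF A] unfolding K_def by metis
  have r0: "0 < r" using rn powr_gt_zero[of 4 "real n / 5"] by linarith
  have "(4::real) powr (real n / 5) < 4 powr 3" using rn r by simp
  then have "real n / 5 < 3" by (rule powr_less_cancel) simp
  then have "(1/4::real)^14 \<le> s" unfolding s_def by (intro power_decreasing) auto
  have "\<bar>rot_y \<theta>\<^sub>0 (q - q')\<bar> \<le> 3"
    using abs_rot_y_le[of \<theta>\<^sub>0 "q - q'"] norm_triangle_ineq4[of q q'] q q' by linarith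
  moreover have "\<bar>proj_sigma r \<theta>\<^sub>0 q - proj_sigma r \<theta>\<^sub>0 q'\<bar> \<le> 8"
    using proj_sigma_bounds[OF r0 q, of \<theta>\<^sub>0] proj_sigma_bounds[OF r0 q', of \<theta>\<^sub>0] by auto
  ultimately have "1 / (4 * K) \<le> 11" using sep abs_Im_sigma_diff_le[of r \<theta>\<^sub>0 q q'] by linarith
  then have "1/44 \<le> K" by (simp add: K_def field_simps)
  have "emeasure lebesgue (proj_sigma r \<theta> ` rc ` Q \<inter> proj_sigma r \<theta> ` rc ` Q') \<le> ennreal 8" for \<theta>
  proof -
    have "proj_sigma r \<theta> ` rc ` Q \<inter> proj_sigma r \<theta> ` rc ` Q' \<subseteq> {-6..2}"
      using proj_sigma_bounds[OF r0] Z by blast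
    then show ?thesis using emeasure_mono[of _ "{-6..2::real}" lebesgue] by simp
  qed
  then have "rho r Q Q' \<le> ennreal (8 * (real 1 * (2 * pi)))"
    unfolding rho_eq_integral_proj_sigma
    by (rule nn_integral_indicator_le_cover[where a="\<lambda>_. 0"]) auto
  also have "\<dots> \<le> ennreal (4^34 * (K * s\<^sup>2))"
  proof (rule ennreal_leI)
    have "8 * (real 1 * (2 * pi)) \<le> 4^34 * (1/44 * ((1/4)^14)\<^sup>2)"
      using pi_less_4 by (simp add: power_one_over)
    also have "\<dots> \<le> 4^34 * (K * s\<^sup>2)"
    proof (rule mult_left_mono)
      have "((1/4::real)^14)\<^sup>2 \<le> s\<^sup>2" using \<open>(1/4)^14 \<le> s\<close> by (rule power_mono) simp
      with \<open>1/44 \<le> K\<close> show "1/44 * ((1/4)^14)\<^sup>2 \<le> K * s\<^sup>2"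
        by (rule mult_mono) (auto simp: K_def)
    qed simp
    finally show "8 * (real 1 * (2 * pi)) \<le> 4^34 * (K * s\<^sup>2)" .
  qed
  finally show ?thesis unfolding K_def s_def .
qed

lemma four_powr_k_minus_2n:
  "4 powr (real_of_int k - 2 * real n) = 4 powr real_of_int k * ((1/4::real)^n)\<^sup>2"
proof -
  have "4 powr (2 * real n) = (4::real)^(2 * n)" using powr_realpow[of 4 "2 * n"] by simp
  moreover have "((1/4::real)^n)\<^sup>2 = 1 / 4^(2 * n)"
    by (simp add: power_one_over power_mult[symmetric] mult.commute)
  ultimately show ?thesis unfolding powr_diff by simp
qed

theorem lemma6:
  shows "\<exists>C>0. \<forall>n::nat. \<forall>r::real. \<forall>j k::int. \<forall>Q Q'.
     n \<ge> 1 \<longrightarrow> r \<ge> 4 powr (real n / 5) \<longrightarrow> (Q, Q') \<in> A_set n r j k \<longrightarrow>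
     rho r Q Q' \<le> ennreal (C * 4 powr (real_of_int k - 2 * real n))"
proof (intro exI[of _ "4^34"] conjI allI impI)
  fix n :: nat and r :: real and j k :: int and Q Q'
  assume rn: "r \<ge> 4 powr (real n / 5)" and A: "(Q, Q') \<in> A_set n r j k"
  have "rho r Q Q' \<le> ennreal (4^34 * (4 powr real_of_int k * ((1/4)^n)\<^sup>2))"
  proof (cases "r < 64")
    case True
    then show ?thesis by (rule rho_le_small_radius[OF rn _ A])
  next
    case False
    then show ?thesis by (intro rho_le_large_radius[OF _ A]) simp
  qed
  then show "rho r Q Q' \<le> ennreal (4^34 * 4 powr (real_of_int k - 2 * real n))"
    unfolding four_powr_k_minus_2n .
qed simp

end
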